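(* For $k\in\mathbb{N}$ let $a_k=\dfrac{|B_{2k}|\,(2k-2)\,4^{k}}{(2k)!}$, where $B_{2k}$ denotes the Bernoulli number. For every $x\in(0,\pi/2)$ and every integer $m\ge 2$, $$2+\sum_{k=2}^{m-1}a_k x^{2k}+\Big(\frac{2x}{\pi}\Big)^{2m}\Big(\frac{\pi^2}{4}-2-\sum_{k=2}^{m-1}a_k\Big(\frac{\pi}{2}\Big)^{2k}\Big)>\Big(\frac{x}{\sin x}\Big)^{2}+\frac{x}{\tan x}>2+\sum_{k=2}^{m}a_k x^{2k},$$ where empty sums equal $0$.
   Context: $B_j$ are the Bernoulli numbers ($B_2=1/6$, $B_4=-1/30$, $B_6=1/42,\dots$). *)

theory Defs
  imports "HOL-Analysis.Analysis"
begin

(* Only even-index values are used, which are convention-independent: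
   B_2 = 1/6, B_4 = -1/30, B_6 = 1/42, ... *)
fun bernoulli :: "nat \<Rightarrow> real" where
  "bernoulli n = (if n = 0 then 1 else
     - (\<Sum>k<n. real (Suc n choose k) * bernoulli k) / real (Suc n))"

declare bernoulli.simps [simp del]

definition a_coeff :: "nat \<Rightarrow> real" where
  "a_coeff k = \<bar>bernoulli (2*k)\<bar> * (2 * real k - 2) * 4 ^ k / fact (2*k)"

lemma bernoulli_check: "bernoulli 2 = 1/6" "bernoulli 4 = -1/30" "bernoulli 6 = 1/42"
  by (simp_all add: bernoulli.simps lessThan_Suc numeral_eq_Suc)

end

theory Submission
  imports Defs "HOL-Library.Complex_Order" "HOL-Complex_Analysis.Complex_Analysis"
begin

(* With G(w) = w / (e^w - 1) = \<Sum> B_n w^n / n!, one checks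
   f(x) := (x / sin x)^2 + x / tan x = Re (G(w) + G(w)^2 e^w) at w = 2ix, and the identity
   G^2 e^w = G - w G' shows that G + G^2 e^w has the coefficients (2 - n) B_n / n!.
   Hence f(x) = \<Sum>_k c_k x^(2k) for 0 < x < pi with c_0 = 2, c_1 = 0 and c_k = a_k for k \<ge> 1;
   the sign (-1)^k B_2k < 0, read off from the positive Taylor coefficients of tan via
   z tan z = G(2iz) - G(4iz) - iz, makes all c_k with k \<ge> 2 positive.
   The lower bound drops a positive tail; the upper bound compares the tail at x with the
   tail at pi/2, where f(pi/2) = pi^2/4, using (x/y)^(2k) \<le> (x/y)^(2m) for k \<ge> m. *)

section \<open>The generating function of the Bernoulli numbers\<close>

lemma bernoulli_sum_binomial:
  assumes "n > 0"
  shows "(\<Sum>k\<le>n. real (Suc n choose k) * bernoulli k) = 0"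
proof -
  have "bernoulli n = - (\<Sum>k<n. real (Suc n choose k) * bernoulli k) / real (Suc n)"
    using assms by (subst bernoulli.simps) simp
  then have "(\<Sum>k<n. real (Suc n choose k) * bernoulli k) + real (Suc n) * bernoulli n = 0"
    by (simp add: field_simps)
  then show ?thesis
    by (simp add: lessThan_Suc_atMost[symmetric])
qed

lemma bernoulli_convolution:
  "(\<Sum>k=0..n. bernoulli k / fact k * (1 / fact (n - k + 1))) = (if n = 0 then 1 else 0)"
proof (cases "n = 0")
  case True
  then show ?thesis by (simp add: bernoulli.simps)
next
  case False
  have "(\<Sum>k=0..n. bernoulli k / fact k * (1 / fact (n - k + 1)))
      = (\<Sum>k\<le>n. real (Suc n choose k) * bernoulli k) / fact (Suc n)"
    unfolding sum_divide_distrib atMost_atLeast0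
  proof (rule sum.cong[OF refl])
    fix k assume k: "k \<in> {0..n}"
    then have "fact k * fact (Suc n - k) * (Suc n choose k) = (fact (Suc n) :: nat)"
      by (intro binomial_fact_lemma) auto
    then have "fact k * fact (n - k + 1) * real (Suc n choose k) = fact (Suc n)"
      using k by (metis Suc_diff_le Suc_eq_plus1 atLeastAtMost_iff of_nat_fact of_nat_mult)
    then show "bernoulli k / fact k * (1 / fact (n - k + 1)) =
        real (Suc n choose k) * bernoulli k / fact (Suc n)"
      by (simp add: field_simps del: fact_Suc)
  qed
  also have "\<dots> = 0"
    using bernoulli_sum_binomial False by simp
  finally show ?thesis
    using False by simp
qed

definition bernoulli_fps :: "complex fps" where
  "bernoulli_fps = Abs_fps (\<lambda>n. of_real (bernoulli n / fact n))"

definition expm1_div_X_fps :: "complex fps" where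
  "expm1_div_X_fps = fps_shift 1 (fps_exp 1)"

lemma bernoulli_fps_nth: "bernoulli_fps $ n = of_real (bernoulli n / fact n)"
  by (simp add: bernoulli_fps_def)

lemma expm1_div_X_fps_nth: "expm1_div_X_fps $ n = of_real (1 / fact (n + 1))"
  by (simp add: expm1_div_X_fps_def algebra_simps)

lemma fps_conv_radius_expm1_div_X_fps [simp]: "fps_conv_radius expm1_div_X_fps = \<infinity>"
  by (simp add: expm1_div_X_fps_def)

lemma expm1_div_X_fps_times_X: "expm1_div_X_fps * fps_X = fps_exp 1 - 1"
  by (rule fps_ext) (simp add: expm1_div_X_fps_def)

lemma bernoulli_fps_times_expm1_div_X: "bernoulli_fps * expm1_div_X_fps = 1"
proof (rule fps_ext)
  fix n
  have "(bernoulli_fps * expm1_div_X_fps) $ n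
      = of_real (\<Sum>i=0..n. bernoulli i / fact i * (1 / fact (n - i + 1)))"
    by (simp add: fps_mult_nth bernoulli_fps_nth expm1_div_X_fps_nth)
  also have "\<dots> = (1 :: complex fps) $ n"
    by (subst bernoulli_convolution) simp
  finally show "(bernoulli_fps * expm1_div_X_fps) $ n = 1 $ n" .
qed

lemma inverse_expm1_div_X_fps: "inverse expm1_div_X_fps = bernoulli_fps"
  by (rule fps_inverse_unique) (simp add: bernoulli_fps_times_expm1_div_X mult.commute)

lemma eval_expm1_div_X_fps: "eval_fps expm1_div_X_fps w * w = exp w - 1"
proof -
  have "eval_fps (expm1_div_X_fps * fps_X) w = eval_fps expm1_div_X_fps w * w"
    by (subst eval_fps_mult) auto
  then show ?thesis
    by (simp add: expm1_div_X_fps_times_X eval_fps_diff)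
qed

lemma exp_ne_1_in_ball:
  fixes w :: complex
  assumes "w \<noteq> 0" "norm w < 2 * pi"
  shows "exp w \<noteq> 1"
proof
  assume "exp w = 1"
  then obtain n :: int where n: "Re w = 0" "Im w = of_int (2 * n) * pi"
    by (auto simp: exp_eq_1)
  have "norm w = \<bar>Im w\<bar>"
    using n(1) by (simp add: cmod_def)
  also have "\<dots> = 2 * pi * \<bar>of_int n\<bar>"
    using n(2) by (simp add: abs_mult)
  finally have "\<bar>of_int n\<bar> < (1::real)"
    using assms by simp
  then have "n = 0" by linarith
  then show False
    using n assms by (simp add: complex_eq_iff)
qed

lemma eval_expm1_div_X_fps_nonzero:
  assumes "norm w < 2 * pi"
  shows "eval_fps expm1_div_X_fps w \<noteq> 0"
proof (cases "w = 0")
  case True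
  then show ?thesis by (simp add: eval_fps_at_0 expm1_div_X_fps_nth)
next
  case False
  then show ?thesis
    using eval_expm1_div_X_fps[of w] exp_ne_1_in_ball[OF False assms] by auto
qed

text \<open>This is \<open>w / (exp w - 1)\<close> with the removable singularity at \<open>0\<close> filled in
  (and the junk value \<open>0\<close> at the poles \<open>2 \<pi> i k\<close>, \<open>k \<noteq> 0\<close>).\<close>

definition bernoulli_gf :: "complex \<Rightarrow> complex" where
  "bernoulli_gf w = inverse (eval_fps expm1_div_X_fps w)"

lemma bernoulli_gf_0: "bernoulli_gf 0 = 1"
  by (simp add: bernoulli_gf_def eval_fps_at_0 expm1_div_X_fps_nth)

lemma bernoulli_gf_times_expm1:
  "norm w < 2 * pi \<Longrightarrow> bernoulli_gf w * (exp w - 1) = w"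
  using eval_expm1_div_X_fps[of w] eval_expm1_div_X_fps_nonzero[of w]
  by (simp add: bernoulli_gf_def field_simps)

lemma bernoulli_gf_has_fps_expansion: "bernoulli_gf has_fps_expansion bernoulli_fps"
proof -
  have "(\<lambda>w. inverse (eval_fps expm1_div_X_fps w)) has_fps_expansion inverse expm1_div_X_fps"
    by (intro has_fps_expansion_inverse eval_fps_has_fps_expansion)
       (auto simp: expm1_div_X_fps_nth)
  then show ?thesis
    by (simp add: bernoulli_gf_def[abs_def] inverse_expm1_div_X_fps)
qed

lemma bernoulli_gf_holomorphic: "bernoulli_gf holomorphic_on ball 0 (2 * pi)"
  unfolding bernoulli_gf_def[abs_def]
  by (intro holomorphic_intros) (auto simp: eval_expm1_div_X_fps_nonzero)

section \<open>The power series of \<open>(x / sin x)^2 + x / tan x\<close>\<close>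

lemma bernoulli_fps_squared_times_exp:
  "bernoulli_fps ^ 2 * fps_exp 1 = bernoulli_fps - fps_X * fps_deriv bernoulli_fps"
proof -
  have exp_eq: "fps_exp 1 = expm1_div_X_fps + fps_X * fps_deriv expm1_div_X_fps"
  proof -
    have "fps_deriv (expm1_div_X_fps * fps_X) = fps_exp 1"
      by (simp add: expm1_div_X_fps_times_X)
    then show ?thesis by (simp add: algebra_simps)
  qed
  have "fps_deriv (bernoulli_fps * expm1_div_X_fps) = 0"
    by (simp add: bernoulli_fps_times_expm1_div_X)
  then have deriv_eq: "bernoulli_fps * fps_deriv expm1_div_X_fps
      = - (fps_deriv bernoulli_fps * expm1_div_X_fps)"
    by (simp add: fps_deriv_mult eq_neg_iff_add_eq_0 add.commute)
  have "bernoulli_fps ^ 2 * fps_exp 1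
      = bernoulli_fps * (bernoulli_fps * expm1_div_X_fps)
        + fps_X * bernoulli_fps * (bernoulli_fps * fps_deriv expm1_div_X_fps)"
    by (simp add: exp_eq power2_eq_square algebra_simps)
  also have "\<dots> = bernoulli_fps * (bernoulli_fps * expm1_div_X_fps)
      - fps_X * fps_deriv bernoulli_fps * (bernoulli_fps * expm1_div_X_fps)"
    by (simp add: deriv_eq algebra_simps)
  finally show ?thesis
    by (simp add: bernoulli_fps_times_expm1_div_X)
qed

definition csc_cot_fps :: "complex fps" where
  "csc_cot_fps = bernoulli_fps + bernoulli_fps ^ 2 * fps_exp 1"

definition csc_cot_gf :: "complex \<Rightarrow> complex" where
  "csc_cot_gf w = bernoulli_gf w + bernoulli_gf w ^ 2 * exp w"

lemma csc_cot_fps_nth: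
  "csc_cot_fps $ n = of_real ((2 - real n) * (bernoulli n / fact n))"
proof -
  have X_deriv: "(fps_X * fps_deriv bernoulli_fps) $ n = of_nat n * bernoulli_fps $ n"
    by (cases n) simp_all
  have "csc_cot_fps $ n = 2 * bernoulli_fps $ n - (fps_X * fps_deriv bernoulli_fps) $ n"
    by (simp add: csc_cot_fps_def bernoulli_fps_squared_times_exp)
  then show ?thesis
    unfolding X_deriv bernoulli_fps_nth by (simp add: algebra_simps)
qed

lemma csc_cot_gf_sums:
  "norm w < 2 * pi \<Longrightarrow> (\<lambda>n. csc_cot_fps $ n * w ^ n) sums csc_cot_gf w"
proof (rule has_fps_expansion_imp_sums_complex[of _ _ "ereal (2 * pi)"])
  show "csc_cot_gf has_fps_expansion csc_cot_fps"
    unfolding csc_cot_gf_def[abs_def] csc_cot_fps_def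
    by (intro fps_expansion_intros bernoulli_gf_has_fps_expansion)
  show "csc_cot_gf holomorphic_on eball 0 (ereal (2 * pi))"
    unfolding csc_cot_gf_def[abs_def] eball_ereal
    by (intro holomorphic_intros bernoulli_gf_holomorphic)
qed auto

lemma csc_cot_gf_imaginary:
  fixes x :: real
  assumes "0 < x" "x < pi"
  shows "csc_cot_gf (2 * \<i> * x) = of_real ((x / sin x)^2 + x / tan x) - \<i> * x"
proof -
  define C where "C = complex_of_real (cos x)"
  define S where "S = complex_of_real (sin x)"
  define w where "w = 2 * \<i> * complex_of_real x"
  have "sin x > 0"
    using assms by (intro sin_gt_zero) auto
  then have S_nz: "S \<noteq> 0"
    by (simp add: S_def)
  have unit: "(C + \<i> * S) * (C - \<i> * S) = 1"
    unfolding C_def S_def by (simp add: algebra_simps complex_eq_iff power2_eq_square[symmetric])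
  have "exp (\<i> * x) = C + \<i> * S"
    by (simp add: C_def S_def cis_conv_exp[symmetric] complex_eq_iff)
  moreover have "exp w = exp (\<i> * x) ^ 2"
    unfolding w_def power2_eq_square exp_add[symmetric] by (rule arg_cong[where f = exp]) algebra
  ultimately have exp_w: "exp w = (C + \<i> * S)^2"
    by simp
  have "norm w < 2 * pi"
    using assms by (simp add: w_def norm_mult)
  moreover have "exp w - 1 = 2 * \<i> * S * (C + \<i> * S)"
    unfolding exp_w using unit by (simp add: power2_eq_square algebra_simps)
  ultimately have G_times: "bernoulli_gf w * (2 * \<i> * S * (C + \<i> * S)) = w"
    using bernoulli_gf_times_expm1 by metis
  have "bernoulli_gf w * (2 * \<i> * S)
      = bernoulli_gf w * (2 * \<i> * S) * ((C + \<i> * S) * (C - \<i> * S))"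
    by (simp add: unit)
  also have "\<dots> = bernoulli_gf w * (2 * \<i> * S * (C + \<i> * S)) * (C - \<i> * S)"
    by (simp only: mult.assoc)
  also have "\<dots> = 2 * \<i> * (of_real x * (C - \<i> * S))"
    by (simp only: G_times) (simp add: w_def algebra_simps)
  finally have "bernoulli_gf w * S = of_real x * (C - \<i> * S)"
    by simp
  then have G_w: "bernoulli_gf w = of_real x * (C - \<i> * S) / S"
    using S_nz by (simp add: field_simps)
  have "csc_cot_gf w = of_real x * (C - \<i> * S) / S
      + of_real x ^ 2 / S ^ 2 * ((C + \<i> * S) * (C - \<i> * S))^2"
    unfolding csc_cot_gf_def G_w exp_w by (simp add: power2_eq_square field_simps)
  also have "\<dots> = of_real ((x / sin x)^2 + x / tan x) - \<i> * of_real x"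
    unfolding unit using S_nz by (simp add: C_def S_def tan_def power_divide field_simps)
  finally show ?thesis
    by (simp add: w_def)
qed

definition csc_cot_coeff :: "nat \<Rightarrow> real" where
  "csc_cot_coeff k = (-4) ^ k * ((2 - 2 * real k) * (bernoulli (2 * k) / fact (2 * k)))"

lemma Re_ii_power: "Re (\<i> ^ n) = (if even n then (-1) ^ (n div 2) else 0)"
  by (cases "even n") (auto elim!: evenE oddE simp: power_mult)

lemma Re_csc_cot_fps_term:
  fixes x :: real
  shows "Re (csc_cot_fps $ n * (2 * \<i> * x) ^ n)
     = (if even n then csc_cot_coeff (n div 2) * (x ^ 2) ^ (n div 2) else 0)"
proof -
  define d where "d n = (2 - real n) * (bernoulli n / fact n)" for n
  have "csc_cot_fps $ n * (2 * \<i> * x) ^ n = of_real (d n * (2 * x) ^ n) * \<i> ^ n"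
    by (simp add: csc_cot_fps_nth d_def power_mult_distrib)
  then have "Re (csc_cot_fps $ n * (2 * \<i> * x) ^ n) = d n * (2 * x) ^ n * Re (\<i> ^ n)"
    by simp
  also have "\<dots> = (if even n then csc_cot_coeff (n div 2) * (x ^ 2) ^ (n div 2) else 0)"
  proof (cases "even n")
    case True
    then obtain k where n: "n = 2 * k" by blast
    have "(-4 :: real) ^ k = (-1) ^ k * 4 ^ k"
      by (simp flip: power_mult_distrib)
    then show ?thesis
      by (simp add: n Re_ii_power power_mult power_mult_distrib csc_cot_coeff_def d_def)
  qed (simp add: Re_ii_power)
  finally show ?thesis .
qed

lemma csc_cot_series:
  fixes x :: real
  assumes "0 < x" "x < pi"
  shows "(\<lambda>k. csc_cot_coeff k * (x ^ 2) ^ k) sums ((x / sin x)^2 + x / tan x)"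
proof -
  define F where "F = (\<lambda>n. if even n then csc_cot_coeff (n div 2) * (x ^ 2) ^ (n div 2) else 0)"
  have "(\<lambda>n. Re (csc_cot_fps $ n * (2 * \<i> * x) ^ n)) sums Re (csc_cot_gf (2 * \<i> * x))"
    using assms by (intro sums_Re csc_cot_gf_sums) (simp add: norm_mult)
  then have "F sums ((x / sin x)^2 + x / tan x)"
    unfolding Re_csc_cot_fps_term csc_cot_gf_imaginary[OF assms] by (simp add: F_def)
  moreover have "(\<lambda>k. F (2 * k)) sums s \<longleftrightarrow> F sums s" for s
    by (rule sums_mono_reindex) (auto simp: strict_mono_def F_def elim!: oddE)
  ultimately show ?thesis
    by (simp add: F_def)
qed

section \<open>The sign of the Bernoulli numbers\<close>

lemma fps_tan_riccati: "fps_deriv (fps_tan (1 :: 'a :: field_char_0)) = 1 + fps_tan 1 ^ 2"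
proof -
  define C where "C = fps_cos (1 :: 'a)"
  define S where "S = fps_sin (1 :: 'a)"
  have C0: "C $ 0 \<noteq> 0"
    by (simp add: C_def fps_cos_def)
  have "fps_deriv (fps_tan 1) = inverse C ^ 2"
    using C0 by (simp add: fps_tan_deriv C_def fps_divide_unit fps_inverse_power)
  also have "\<dots> = (C ^ 2 + S ^ 2) * inverse C ^ 2"
    by (simp add: C_def S_def fps_sin_cos_sum_of_squares)
  also have "\<dots> = (C * inverse C) ^ 2 + (S * inverse C) ^ 2"
    by (simp add: power_mult_distrib algebra_simps)
  also have "\<dots> = 1 + fps_tan 1 ^ 2"
    using C0 by (simp add: inverse_mult_eq_1' fps_tan_def fps_divide_unit C_def S_def)
  finally show ?thesis .
qed

lemma riccati_fps_coeff:
  fixes f :: "'a :: comm_ring_1 fps"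
  assumes "fps_deriv f = 1 + f ^ 2"
  shows "of_nat (Suc n) * f $ Suc n = (if n = 0 then 1 else 0) + (\<Sum>i=0..n. f $ i * f $ (n - i))"
  using arg_cong[OF assms, of "\<lambda>g. g $ n"] by (simp add: power2_eq_square fps_mult_nth)

text \<open>\<open>Complex_Order\<close> orders \<open>complex\<close> by \<open>z \<le> w \<longleftrightarrow> Re z \<le> Re w \<and> Im z = Im w\<close>,
  so a nonnegative coefficient is a nonnegative real.\<close>

lemma riccati_fps_nonneg:
  fixes f :: "complex fps"
  assumes "fps_deriv f = 1 + f ^ 2" "f $ 0 = 0"
  shows "0 \<le> f $ n"
proof (induction n rule: less_induct)
  case (less n)
  show ?case
  proof (cases n)
    case 0
    then show ?thesis using assms(2) by simp
  next
    case (Suc m)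
    have "0 \<le> (if m = 0 then 1 else 0) + (\<Sum>i=0..m. f $ i * f $ (m - i))"
      using less Suc
      by (intro add_nonneg_nonneg sum_nonneg mult_nonneg_nonneg) (auto simp: less_eq_complex_def)
    then have "0 \<le> of_nat (Suc m) * f $ Suc m"
      using riccati_fps_coeff[OF assms(1)] by simp
    then show ?thesis
      using Suc by (simp add: less_eq_complex_def zero_le_mult_iff)
  qed
qed

lemma riccati_fps_odd_pos:
  fixes f :: "complex fps"
  assumes "fps_deriv f = 1 + f ^ 2" "f $ 0 = 0"
  shows "0 < f $ (2 * k + 1)"
proof (induction k)
  case 0
  show ?case
    using riccati_fps_coeff[OF assms(1), of 0] assms(2) by (simp add: less_complex_def)
next
  case (Suc k)
  have f1: "f $ 1 = 1"
    using riccati_fps_coeff[OF assms(1), of 0] assms(2) by simp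
  let ?m = "2 * k + 2"
  have "f $ 1 * f $ (?m - 1) \<le> (\<Sum>i=0..?m. f $ i * f $ (?m - i))"
    by (rule member_le_sum) (auto intro: mult_nonneg_nonneg riccati_fps_nonneg[OF assms])
  moreover have "0 < f $ 1 * f $ (?m - 1)"
    using Suc.IH f1 by simp
  moreover have "of_nat (Suc ?m) * f $ Suc ?m = (\<Sum>i=0..?m. f $ i * f $ (?m - i))"
    using riccati_fps_coeff[OF assms(1), of ?m] by simp
  ultimately have "0 < of_nat (Suc ?m) * f $ Suc ?m"
    by order
  then show ?case
    by (simp add: less_complex_def zero_less_mult_iff numeral_eq_Suc)
qed

lemma z_tan_z_bernoulli_gf:
  assumes "norm z < pi / 2"
  shows "z * tan z = bernoulli_gf (2 * \<i> * z) - bernoulli_gf (4 * \<i> * z) - \<i> * z"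
proof (cases "z = 0")
  case True
  then show ?thesis by (simp add: bernoulli_gf_0)
next
  case False
  define u where "u = exp (2 * \<i> * z)"
  have u_sq: "exp (4 * \<i> * z) = u ^ 2"
    unfolding u_def power2_eq_square exp_add[symmetric] by (rule arg_cong[where f = exp]) algebra
  have norms: "norm (2 * \<i> * z) < 2 * pi" "norm (4 * \<i> * z) < 2 * pi"
    using assms pi_gt_zero norm_ge_zero[of z] by (simp_all add: norm_mult, linarith)
  have "u ^ 2 \<noteq> 1"
    using exp_ne_1_in_ball[of "4 * \<i> * z"] norms False by (simp add: u_sq)
  then have u_minus: "u - 1 \<noteq> 0" and u_plus: "u + 1 \<noteq> 0"
    by (auto simp: power2_eq_square eq_neg_iff_add_eq_0[symmetric])
  have G2: "bernoulli_gf (2 * \<i> * z) * (u - 1) = 2 * \<i> * z"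
    using bernoulli_gf_times_expm1[OF norms(1)] by (simp add: u_def)
  have G4: "bernoulli_gf (4 * \<i> * z) * ((u - 1) * (u + 1)) = 4 * \<i> * z"
    using bernoulli_gf_times_expm1[OF norms(2)] unfolding u_sq
    by (simp add: power2_eq_square algebra_simps)
  have tan_z: "tan z * (u + 1) = - \<i> * (u - 1)"
  proof -
    define v where "v = exp (\<i> * z)"
    have v_sq: "v ^ 2 = u"
      unfolding u_def v_def power2_eq_square exp_add[symmetric]
      by (rule arg_cong[where f = exp]) algebra
    have v_nz: "v \<noteq> 0" and exp_minus_iz: "exp (- (\<i> * z)) = inverse v"
      by (simp_all add: v_def exp_minus)
    have cos_z: "cos z * (2 * v) = u + 1" and sin_z: "sin z * (2 * \<i> * v) = u - 1"
      using v_nz by (simp_all add: cos_exp_eq sin_exp_eq exp_minus_iz v_sq[symmetric]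
          power2_eq_square field_simps v_def[symmetric])
    then have "cos z \<noteq> 0"
      using u_plus by auto
    then have "tan z * (u + 1) = sin z * (2 * v)"
      by (simp add: tan_def cos_z[symmetric])
    also have "\<dots> = - \<i> * (u - 1)"
      using sin_z[symmetric] by (simp add: algebra_simps)
    finally show ?thesis .
  qed
  have "z * tan z * ((u - 1) * (u + 1))
      = (bernoulli_gf (2 * \<i> * z) - bernoulli_gf (4 * \<i> * z) - \<i> * z) * ((u - 1) * (u + 1))"
    using tan_z G2 G4 by algebra
  then show ?thesis
    using u_minus u_plus by simp
qed

lemma X_times_fps_tan:
  "fps_X * fps_tan 1
     = (bernoulli_fps oo (fps_const (2 * \<i>) * fps_X))
       - (bernoulli_fps oo (fps_const (4 * \<i>) * fps_X)) - fps_const \<i> * fps_X"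
proof (rule fps_expansion_unique_complex)
  show "(\<lambda>z. z * tan z) has_fps_expansion fps_X * fps_tan 1"
    by (intro fps_expansion_intros)
  have "eventually (\<lambda>z. z \<in> ball (0::complex) (pi / 2)) (nhds 0)"
    by (intro eventually_nhds_in_open) auto
  then have eq: "eventually (\<lambda>z. bernoulli_gf (2 * \<i> * z) - bernoulli_gf (4 * \<i> * z) - \<i> * z
      = z * tan z) (nhds 0)"
    by eventually_elim (simp add: z_tan_z_bernoulli_gf)
  have expansion: "(\<lambda>z. bernoulli_gf (2 * \<i> * z) - bernoulli_gf (4 * \<i> * z) - \<i> * z)
      has_fps_expansion (bernoulli_fps oo (fps_const (2 * \<i>) * fps_X))
        - (bernoulli_fps oo (fps_const (4 * \<i>) * fps_X)) - fps_const \<i> * fps_X"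
    using bernoulli_gf_has_fps_expansion
    by (intro fps_expansion_intros has_fps_expansion_compose[unfolded o_def]) auto
  show "(\<lambda>z. z * tan z) has_fps_expansion
      (bernoulli_fps oo (fps_const (2 * \<i>) * fps_X))
        - (bernoulli_fps oo (fps_const (4 * \<i>) * fps_X)) - fps_const \<i> * fps_X"
    using has_fps_expansion_cong[OF eq refl] expansion by blast
qed

lemma fps_tan_nth_bernoulli:
  assumes "k \<ge> 1"
  shows "fps_tan 1 $ (2 * k - 1)
           = complex_of_real (((-4) ^ k - (-16) ^ k) * (bernoulli (2 * k) / fact (2 * k)))"
proof -
  have "fps_tan 1 $ (2 * k - 1) = (fps_X * fps_tan (1 :: complex)) $ (2 * k)"
    using assms by simp
  also note X_times_fps_tan
  finally have "fps_tan 1 $ (2 * k - 1)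
      = (2 * \<i>) ^ (2 * k) * bernoulli_fps $ (2 * k) - (4 * \<i>) ^ (2 * k) * bernoulli_fps $ (2 * k)"
    using assms by simp
  also have "(2 * \<i>) ^ (2 * k) = (-4 :: complex) ^ k"
    by (simp add: power_mult power_mult_distrib)
  also have "(4 * \<i>) ^ (2 * k) = (-16 :: complex) ^ k"
    by (simp add: power_mult power_mult_distrib)
  finally show ?thesis
    by (simp add: bernoulli_fps_nth algebra_simps)
qed

lemma bernoulli_even_sign:
  assumes "k \<ge> 1"
  shows "(-1) ^ k * bernoulli (2 * k) < 0"
proof -
  have "0 < fps_tan (1 :: complex) $ (2 * (k - 1) + 1)"
    by (intro riccati_fps_odd_pos fps_tan_riccati) (simp add: fps_tan_def fps_sin_def fps_cos_def
        fps_divide_unit)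
  also have "2 * (k - 1) + 1 = 2 * k - 1"
    using assms by simp
  also note fps_tan_nth_bernoulli[OF assms]
  finally have "0 < ((-4) ^ k - (-16) ^ k) * (bernoulli (2 * k) / fact (2 * k))"
    unfolding less_complex_def Re_complex_of_real by simp
  then have "0 < ((-4) ^ k - (-16) ^ k) * (bernoulli (2 * k) / fact (2 * k)) * fact (2 * k)"
    by (rule mult_pos_pos) simp
  moreover have "(-4 :: real) ^ k - (-16) ^ k = (-1) ^ k * (4 ^ k - 16 ^ k)"
    by (simp add: right_diff_distrib flip: power_mult_distrib)
  ultimately have "0 < ((-1) ^ k * bernoulli (2 * k)) * (4 ^ k - 16 ^ k)"
    by (simp add: ac_simps)
  moreover have "(4::real) ^ k < 16 ^ k"
    using assms by (intro power_strict_mono) auto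
  ultimately show ?thesis
    by (simp add: zero_less_mult_iff)
qed

section \<open>The coefficients \<open>a_k\<close>\<close>

lemma csc_cot_coeff_eq_a_coeff:
  assumes "k \<ge> 1"
  shows "csc_cot_coeff k = a_coeff k"
proof -
  have "\<bar>bernoulli (2 * k)\<bar> = \<bar>(-1) ^ k * bernoulli (2 * k)\<bar>"
    by (simp add: abs_mult)
  also have "\<dots> = - ((-1) ^ k * bernoulli (2 * k))"
    using bernoulli_even_sign[OF assms] by simp
  finally have abs_bernoulli: "\<bar>bernoulli (2 * k)\<bar> = - ((-1) ^ k * bernoulli (2 * k))" .
  have "(-4 :: real) ^ k = (-1) ^ k * 4 ^ k"
    by (simp flip: power_mult_distrib)
  then show ?thesis
    unfolding csc_cot_coeff_def a_coeff_def abs_bernoulli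
    by (simp add: algebra_simps diff_divide_distrib)
qed

lemma a_coeff_pos:
  assumes "k \<ge> 2"
  shows "a_coeff k > 0"
proof -
  have "bernoulli (2 * k) \<noteq> 0"
    using bernoulli_even_sign[of k] assms by auto
  then show ?thesis
    using assms unfolding a_coeff_def by (intro divide_pos_pos mult_pos_pos) auto
qed

lemma csc_cot_coeff_partial_sum:
  fixes x :: real
  assumes "n \<ge> 2"
  shows "(\<Sum>k<n. csc_cot_coeff k * (x ^ 2) ^ k) = 2 + (\<Sum>k=2..n-1. a_coeff k * x ^ (2 * k))"
  using assms
proof (induction n rule: dec_induct)
  case base
  show ?case
    by (simp add: numeral_eq_Suc csc_cot_coeff_def bernoulli.simps)
next
  case (step n)
  then obtain n' where "n = Suc n'" by (cases n) auto
  with step show ?case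
    by (simp add: csc_cot_coeff_eq_a_coeff power_mult sum.cl_ivl_Suc)
qed

section \<open>Comparing tails of power series\<close>

lemma power_series_tail_less:
  fixes c :: "nat \<Rightarrow> real"
  assumes sums_w: "(\<lambda>k. c k * w ^ k) sums S"
    and z: "0 < z" "z < w"
    and nonneg: "\<And>k. n \<le> k \<Longrightarrow> 0 \<le> c k"
    and pos: "n < j" "0 < c j"
  shows "suminf (\<lambda>k. c k * z ^ k)
           < (\<Sum>k<n. c k * z ^ k) + (z / w) ^ n * (S - (\<Sum>k<n. c k * w ^ k))"
proof -
  define q where "q = z / w"
  have q: "0 < q" "q < 1" and z_eq: "z = q * w"
    using z by (auto simp: q_def)
  have "summable (\<lambda>k. c k * z ^ k)"
    using sums_summable[OF sums_w] by (rule powser_inside) (use z in simp)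
  then have sums_z: "(\<lambda>i. c (i + n) * z ^ (i + n))
      sums (suminf (\<lambda>k. c k * z ^ k) - (\<Sum>k<n. c k * z ^ k))"
    by (subst sums_iff_shift) (simp add: summable_sums)
  have sums_w': "(\<lambda>i. c (i + n) * w ^ (i + n)) sums (S - (\<Sum>k<n. c k * w ^ k))"
    using sums_w by (subst sums_iff_shift) simp
  define D where "D = (\<lambda>i. q ^ n * (c (i + n) * w ^ (i + n)) - c (i + n) * z ^ (i + n))"
  have sums_D: "D sums (q ^ n * (S - (\<Sum>k<n. c k * w ^ k))
      - (suminf (\<lambda>k. c k * z ^ k) - (\<Sum>k<n. c k * z ^ k)))"
    unfolding D_def by (intro sums_diff sums_mult sums_w' sums_z)
  have D_eq: "D i = q ^ n * (c (i + n) * w ^ (i + n)) * (1 - q ^ i)" for i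
    by (simp add: D_def z_eq power_mult_distrib power_add algebra_simps)
  have "sum D {..<0} < suminf D"
  proof (rule sum_less_suminf2[of _ _ "j - n"])
    show "summable D"
      using sums_D by (rule sums_summable)
    show "0 \<le> D i" for i
      unfolding D_eq using q z nonneg[of "i + n"] by (auto intro!: mult_nonneg_nonneg power_le_one)
    have "q ^ (j - n) < 1"
      using q pos by (simp add: power_less_one_iff)
    then show "0 < D (j - n)"
      unfolding D_eq using q z pos by (auto intro!: mult_pos_pos)
  qed auto
  then show ?thesis
    using sums_unique[OF sums_D] by (simp add: q_def)
qed

theorem theorem5:
  fixes x :: real and m :: nat
  assumes "0 < x" and "x < pi / 2" and "2 \<le> m"
  shows "2 + (\<Sum>k=2..m-1. a_coeff k * x ^ (2*k))
           + (2 * x / pi) ^ (2*m) * (pi^2 / 4 - 2 - (\<Sum>k=2..m-1. a_coeff k * (pi/2) ^ (2*k)))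
         > (x / sin x)^2 + x / tan x
       \<and> (x / sin x)^2 + x / tan x > 2 + (\<Sum>k=2..m. a_coeff k * x ^ (2*k))"
proof
  let ?T = "\<lambda>z k. csc_cot_coeff k * z ^ k"
  have pos: "0 < csc_cot_coeff k" if "2 \<le> k" for k
    using that csc_cot_coeff_eq_a_coeff a_coeff_pos by simp
  have sums_x: "?T (x ^ 2) sums ((x / sin x)^2 + x / tan x)"
    using assms by (intro csc_cot_series) auto
  have sums_pi: "?T ((pi / 2) ^ 2) sums (pi^2 / 4)"
    using csc_cot_series[of "pi / 2"] by (simp add: tan_def power_divide)
  have "sum (?T (x ^ 2)) {..<Suc m} < suminf (?T (x ^ 2))"
    using sums_x assms pos by (intro sum_less_suminf) (auto simp: sums_iff)
  then show "(x / sin x)^2 + x / tan x > 2 + (\<Sum>k=2..m. a_coeff k * x ^ (2*k))"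
    using sums_x assms csc_cot_coeff_partial_sum[of "Suc m" x] by (simp add: sums_iff)
  have "suminf (?T (x ^ 2)) < sum (?T (x ^ 2)) {..<m}
      + (x ^ 2 / (pi / 2) ^ 2) ^ m * (pi^2 / 4 - sum (?T ((pi / 2) ^ 2)) {..<m})"
    using assms pos by (intro power_series_tail_less[OF sums_pi, of _ _ "Suc m"])
       (auto intro: less_imp_le simp: power_strict_mono)
  moreover have "(x ^ 2 / (pi / 2) ^ 2) ^ m = (2 * x / pi) ^ (2 * m)"
    by (simp add: power_mult power_divide power_mult_distrib)
  ultimately show "2 + (\<Sum>k=2..m-1. a_coeff k * x ^ (2*k))
           + (2 * x / pi) ^ (2*m) * (pi^2 / 4 - 2 - (\<Sum>k=2..m-1. a_coeff k * (pi/2) ^ (2*k)))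
         > (x / sin x)^2 + x / tan x"
    using sums_x assms csc_cot_coeff_partial_sum[OF assms(3), of x]
      csc_cot_coeff_partial_sum[OF assms(3), of "pi / 2"]
    by (simp add: sums_iff diff_diff_eq)
qed

end
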